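(* Let $v_2$, $v_3$ and $\delta$ satisfy the standing assumptions described in the context. Then there exist numbers $\ell^*\le 1$ and $\theta^*<2\pi/3$, uniquely determined by the energy (i.e. by $v_2$ and $v_3$), such that every optimal cell $(y_1,\dots,y_6)$ satisfies $|y_i-y_{i-1}|=\ell^*$ and $\theta_i=\theta^*$ for all $i=1,\dots,6$.
   Context: A cell is a $6$-tuple $(y_1,\dots,y_6)\in(\mathbb{R}^3)^6$, indices modulo $6$. Its bonds are the segments $\{y_{i-1},y_i\}$ with lengths $|y_i-y_{i-1}|$, and $\theta_i\in[0,\pi]$ is the bond angle at $y_i$ between the segments $\{y_i,y_{i+1}\}$ and $\{y_i,y_{i-1}\}$. Cell energy: $$E_{\rm cell}(y_1,\dots,y_6)=\tfrac12\sum_{i=1}^6 v_2(|y_i-y_{i-1}|)+\sum_{i=1}^6 v_2(|y_i-y_{i-2}|)+\sum_{i=1}^6 v_3(\theta_i).$$ An optimal cell is a minimizer of $E_{\rm cell}$ on $(\mathbb{R}^3)^6$. Standing assumptions: $v_2:(0,\infty)\to[-1,\infty)$ is continuous, attains its minimum value $-1$ only at $1$, is decreasing on $(0,1)$ and increasing on $[1,\infty)$, and is differentiable on $(5/4,\sqrt3]$ with $v_2'>0$ there; $v_3:[0,\pi]\to[0,\infty)$ is continuous, attains its minimum value $0$ only at $2\pi/3$, and is differentiable at $2\pi/3$. Moreover there is $0<\delta\le 0.2$ with: (i) $v_2(1-\delta)>11+12v_2(\sqrt3)$; (ii) $v_2(1+\delta)>-1+12v_2(\sqrt3)-12v_2(\sqrt3(1-\delta)^2)$;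 (iii) $v_3(\theta)>6+6v_2(\sqrt3)$ whenever $|\theta-2\pi/3|\ge\delta$; (iv) the map $(\ell_1,\ell_2,\theta)\mapsto \frac14 v_2(\ell_1)+\frac14 v_2(\ell_2)+v_2\big((\ell_1^2+\ell_2^2-2\ell_1\ell_2\cos\theta)^{1/2}\big)+v_3(\theta)$ is strictly convex on $\{|\ell_1-1|<\delta,\ |\ell_2-1|<\delta,\ |\theta-2\pi/3|<\delta\}$. *)

theory Defs
  imports "HOL-Analysis.Analysis"
begin

text \<open>A cell is represented by a map y :: nat => real^3; only y 0, ..., y 5 matter,
  indices are read modulo 6 (the paper's y_1..y_6 correspond to y 1..y 5, y 0 = y_6).\<close>

definition cpt :: "(nat \<Rightarrow> real^3) \<Rightarrow> int \<Rightarrow> real^3" where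
  "cpt y i = y (nat (i mod 6))"

definition bond_len :: "(nat \<Rightarrow> real^3) \<Rightarrow> int \<Rightarrow> real" where
  "bond_len y i = dist (cpt y i) (cpt y (i - 1))"

definition snd_len :: "(nat \<Rightarrow> real^3) \<Rightarrow> int \<Rightarrow> real" where
  "snd_len y i = dist (cpt y i) (cpt y (i - 2))"

definition vec_angle :: "real^3 \<Rightarrow> real^3 \<Rightarrow> real" where
  "vec_angle u v = arccos (inner u v / (norm u * norm v))"

definition bond_angle :: "(nat \<Rightarrow> real^3) \<Rightarrow> int \<Rightarrow> real" where
  "bond_angle y i = vec_angle (cpt y (i + 1) - cpt y i) (cpt y (i - 1) - cpt y i)"

text \<open>The energy is only defined when all distances entering v_2 are positive.\<close>
definition admissible_cell :: "(nat \<Rightarrow> real^3) \<Rightarrow> bool" where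
  "admissible_cell y \<longleftrightarrow> (\<forall>i::int. bond_len y i > 0 \<and> snd_len y i > 0)"

definition E_cell :: "(real \<Rightarrow> real) \<Rightarrow> (real \<Rightarrow> real) \<Rightarrow> (nat \<Rightarrow> real^3) \<Rightarrow> real" where
  "E_cell v2 v3 y =
     (1/2) * (\<Sum>i\<in>{1..6::int}. v2 (bond_len y i))
     + (\<Sum>i\<in>{1..6::int}. v2 (snd_len y i))
     + (\<Sum>i\<in>{1..6::int}. v3 (bond_angle y i))"

definition optimal_cell :: "(real \<Rightarrow> real) \<Rightarrow> (real \<Rightarrow> real) \<Rightarrow> (nat \<Rightarrow> real^3) \<Rightarrow> bool" where
  "optimal_cell v2 v3 y \<longleftrightarrow> admissible_cell y \<and>
     (\<forall>z. admissible_cell z \<longrightarrow> E_cell v2 v3 y \<le> E_cell v2 v3 z)"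

definition strict_convex_on :: "'a::real_vector set \<Rightarrow> ('a \<Rightarrow> real) \<Rightarrow> bool" where
  "strict_convex_on S f \<longleftrightarrow> convex S \<and>
     (\<forall>x\<in>S. \<forall>y\<in>S. x \<noteq> y \<longrightarrow> (\<forall>t::real. 0 < t \<and> t < 1 \<longrightarrow>
        f ((1 - t) *\<^sub>R x + t *\<^sub>R y) < (1 - t) * f x + t * f y))"

definition standing_assumptions :: "(real \<Rightarrow> real) \<Rightarrow> (real \<Rightarrow> real) \<Rightarrow> real \<Rightarrow> bool" where
  "standing_assumptions v2 v3 \<delta> \<longleftrightarrow>
     continuous_on {0<..} v2 \<and>
     v2 1 = -1 \<and> (\<forall>r>0. r \<noteq> 1 \<longrightarrow> v2 r > -1) \<and>
     (\<forall>r s. 0 < r \<and> r \<le> s \<and> s < 1 \<longrightarrow> v2 s \<le> v2 r) \<and>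
     (\<forall>r s. 1 \<le> r \<and> r \<le> s \<longrightarrow> v2 r \<le> v2 s) \<and>
     (\<forall>r\<in>{5/4<..sqrt 3}. \<exists>d>0. (v2 has_real_derivative d) (at r)) \<and>
     continuous_on {0..pi} v3 \<and>
     v3 (2*pi/3) = 0 \<and> (\<forall>t\<in>{0..pi}. t \<noteq> 2*pi/3 \<longrightarrow> v3 t > 0) \<and>
     v3 differentiable (at (2*pi/3)) \<and>
     0 < \<delta> \<and> \<delta> \<le> 1/5 \<and>
     v2 (1 - \<delta>) > 11 + 12 * v2 (sqrt 3) \<and>
     v2 (1 + \<delta>) > -1 + 12 * v2 (sqrt 3) - 12 * v2 (sqrt 3 * (1 - \<delta>)^2) \<and>
     (\<forall>t\<in>{0..pi}. \<bar>t - 2*pi/3\<bar> \<ge> \<delta> \<longrightarrow> v3 t > 6 + 6 * v2 (sqrt 3)) \<and>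
     strict_convex_on {(l1, l2, t). \<bar>l1 - 1\<bar> < \<delta> \<and> \<bar>l2 - 1\<bar> < \<delta> \<and> \<bar>t - 2*pi/3\<bar> < \<delta>}
       (\<lambda>(l1, l2, t). (1/4) * v2 l1 + (1/4) * v2 l2
          + v2 (sqrt (l1^2 + l2^2 - 2 * l1 * l2 * cos t)) + v3 t)"

end

theory Submission
  imports Defs
begin

text \<open>
  By the law of cosines the second-neighbour distances are determined by the bond lengths and
  angles, so the cell energy is a sum of six terms pair_energy (l_i, l_(i-1), theta_(i-1)); a
  puckered (chair) hexagon realises 6 * pair_energy (l, l, theta) for every l > 0 and
  theta <= 2 pi / 3. Comparing an optimal cell with the flat unit hexagon, conditions (i)--(iii)
  confine all its bond lengths and angles to the delta-window around (1, 1, 2 pi / 3) where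
  pair_energy is strictly convex by (iv). Strict Jensen then forces the six triples to coincide,
  and strict convexity at the midpoint of two optimal cells makes the common triple the same for
  all of them. Finally theta > 2 pi / 3 and l > 1 are excluded by the monotonicity of v3 and v2,
  and theta = 2 pi / 3 because there v3 is stationary while the second-neighbour term still
  decreases as the angle closes.
\<close>

section \<open>Strict Jensen inequality\<close>

lemma strict_convex_on_imp_convex_on:
  assumes "strict_convex_on S f"
  shows "convex_on S f"
  unfolding convex_on_def
proof (intro conjI ballI allI impI)
  show "convex S" using assms unfolding strict_convex_on_def by blast
next
  fix x y and u v :: real
  assume xy: "x \<in> S" "y \<in> S" and uv: "0 \<le> u" "0 \<le> v" "u + v = 1"
  show "f (u *\<^sub>R x + v *\<^sub>R y) \<le> u * f x + v * f y"
  proof (cases "x = y \<or> u = 0 \<or> v = 0")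
    case True
    with uv show ?thesis
      by (auto simp: scaleR_left_distrib[symmetric] distrib_right[symmetric])
  next
    case False
    with uv have "0 < v" "v < 1" "u = 1 - v" by auto
    with assms xy False show ?thesis
      unfolding strict_convex_on_def by (metis less_imp_le)
  qed
qed

lemma strict_convex_on_midpoint_less:
  assumes "strict_convex_on S f" "x \<in> S" "y \<in> S" "x \<noteq> y"
  shows "f ((1/2) *\<^sub>R (x + y)) < (f x + f y) / 2"
proof -
  have "f ((1 - 1/2) *\<^sub>R x + (1/2) *\<^sub>R y) < (1 - 1/2) * f x + (1/2) * f y"
  proof -
    have "(0::real) < 1/2" "(1::real)/2 < 1" by auto
    with assms show ?thesis unfolding strict_convex_on_def by blast
  qed
  then show ?thesis by (simp add: scaleR_right_distrib)
qed

lemma mean_split_off: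
  fixes p :: "'b \<Rightarrow> 'a::real_vector"
  assumes fin: "finite I" and j: "j \<in> I" and two: "2 \<le> card I"
  shows "(\<Sum>i\<in>I. (1 / card I) *\<^sub>R p i)
    = (1 - 1 / card I) *\<^sub>R (\<Sum>i\<in>I - {j}. (1 / (real (card I) - 1)) *\<^sub>R p i) + (1 / card I) *\<^sub>R p j"
proof -
  have "(1 - 1 / card I) *\<^sub>R (\<Sum>i\<in>I - {j}. (1 / (real (card I) - 1)) *\<^sub>R p i)
      = (\<Sum>i\<in>I - {j}. (1 / card I) *\<^sub>R p i)"
    unfolding scaleR_sum_right using two by (intro sum.cong) (auto simp: field_simps)
  then show ?thesis using sum.remove[OF fin j, of "\<lambda>i. (1 / card I) *\<^sub>R p i"] by simp
qed

text \<open>Split off a point different from the mean; Jensen on the remaining points and strict convexity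
  on the resulting two-point combination.\<close>

lemma strict_convex_on_mean_less:
  fixes f :: "'a::real_vector \<Rightarrow> real"
  assumes sc: "strict_convex_on S f" and fin: "finite I" and pS: "\<And>i. i \<in> I \<Longrightarrow> p i \<in> S"
    and jk: "j \<in> I" "k \<in> I" "p j \<noteq> p k"
  shows "f (\<Sum>i\<in>I. (1 / card I) *\<^sub>R p i) < (\<Sum>i\<in>I. f (p i)) / card I"
proof -
  define n where "n = real (card I)"
  define m where "m = (\<Sum>i\<in>I. (1 / n) *\<^sub>R p i)"
  have "j \<noteq> k" using jk by auto
  then have "card {j, k} = 2" by simp
  moreover have "card {j, k} \<le> card I" by (rule card_mono[OF fin]) (use jk in auto)
  ultimately have two: "2 \<le> card I" by simp
  obtain j0 where j0: "j0 \<in> I" "p j0 \<noteq> m" using jk by metis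
  define q where "q = (\<Sum>i\<in>I - {j0}. (1 / (n - 1)) *\<^sub>R p i)"
  have m_split: "m = (1 - 1/n) *\<^sub>R q + (1/n) *\<^sub>R p j0"
    unfolding m_def q_def n_def using mean_split_off[OF fin j0(1) two] .
  have weights: "(\<Sum>i\<in>I - {j0}. 1 / (n - 1)) = 1"
    using fin j0(1) two unfolding n_def by (simp add: card_Diff_singleton of_nat_diff)
  have "q \<in> S" unfolding q_def
    using sc fin pS two unfolding n_def strict_convex_on_def
    by (intro convex_sum[OF _ _ weights[unfolded n_def]]) auto
  moreover have "q \<noteq> p j0"
  proof
    assume "q = p j0"
    then have "m = p j0" using m_split by (simp add: scaleR_left_distrib[symmetric])
    with j0 show False by simp
  qed
  moreover have "0 < 1/n" "1/n < 1" using two unfolding n_def by auto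
  ultimately have "f m < (1 - 1/n) * f q + (1/n) * f (p j0)"
    using sc pS[OF j0(1)] unfolding strict_convex_on_def m_split by blast
  also have "\<dots> \<le> (1 - 1/n) * (\<Sum>i\<in>I - {j0}. (1 / (n - 1)) * f (p i)) + (1/n) * f (p j0)"
  proof -
    have "I - {j0} \<noteq> {}" using jk \<open>j \<noteq> k\<close> by auto
    then have "f q \<le> (\<Sum>i\<in>I - {j0}. (1 / (n - 1)) * f (p i))"
      unfolding q_def using strict_convex_on_imp_convex_on[OF sc] fin pS two weights unfolding n_def
      by (intro convex_on_sum) auto
    then show ?thesis using two unfolding n_def by (intro add_right_mono mult_left_mono) auto
  qed
  also have "\<dots> = (\<Sum>i\<in>I. (1 / n) * f (p i))"
    unfolding n_def using mean_split_off[OF fin j0(1) two, of "\<lambda>i. f (p i)"] by simp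
  finally show ?thesis unfolding m_def n_def by (simp add: sum_divide_distrib)
qed

section \<open>Bond data of a cell\<close>

lemma sum_int_1_6:
  "(\<Sum>i\<in>{1..6::int}. g i) = g 1 + g 2 + g 3 + g 4 + g 5 + (g 6 :: 'a::comm_monoid_add)"
proof -
  have "{1..6::int} = {1, 2, 3, 4, 5, 6}" by auto
  then show ?thesis by (simp add: add.assoc)
qed

lemma member_le_sum_bounded_below:
  fixes f :: "'a \<Rightarrow> real"
  assumes "finite I" "i \<in> I" "\<And>j. j \<in> I \<Longrightarrow> c \<le> f j"
  shows "f i + (real (card I) - 1) * c \<le> (\<Sum>j\<in>I. f j)"
proof -
  have "real (card (I - {i})) * c \<le> (\<Sum>j\<in>I - {i}. f j)"
    by (rule sum_bounded_below) (use assms in auto)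
  moreover have "card I > 0" using assms card_gt_0_iff by blast
  then have "real (card (I - {i})) = real (card I) - 1"
    using assms by (simp add: card_Diff_singleton of_nat_diff)
  ultimately show ?thesis
    using sum.remove[OF assms(1,2), of f] by simp
qed

lemma mod6_representative: "\<exists>j\<in>{1..6::int}. i mod 6 = j mod 6"
proof -
  have "(i - 1) mod 6 + 1 \<in> {1..6}" by auto
  moreover have "i mod 6 = ((i - 1) mod 6 + 1) mod 6" by presburger
  ultimately show ?thesis by blast
qed

lemma bond_len_cong:
  assumes "i mod 6 = j mod 6"
  shows "bond_len y i = bond_len y j"
proof -
  have "(i - 1) mod 6 = (j - 1) mod 6" by (rule mod_diff_cong[OF assms refl])
  then show ?thesis unfolding bond_len_def cpt_def assms by (simp only:)
qed

lemma snd_len_cong: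
  assumes "i mod 6 = j mod 6"
  shows "snd_len y i = snd_len y j"
proof -
  have "(i - 2) mod 6 = (j - 2) mod 6" by (rule mod_diff_cong[OF assms refl])
  then show ?thesis unfolding snd_len_def cpt_def assms by (simp only:)
qed

lemma bond_angle_cong:
  assumes "i mod 6 = j mod 6"
  shows "bond_angle y i = bond_angle y j"
proof -
  have "(i + 1) mod 6 = (j + 1) mod 6" by (rule mod_add_cong[OF assms refl])
  moreover have "(i - 1) mod 6 = (j - 1) mod 6" by (rule mod_diff_cong[OF assms refl])
  ultimately show ?thesis unfolding bond_angle_def cpt_def assms by (simp only:)
qed

lemma vec_angle_bounds: "0 \<le> vec_angle u w \<and> vec_angle u w \<le> pi"
proof -
  have "\<bar>inner u w / (norm u * norm w)\<bar> \<le> 1"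
  proof (cases "norm u * norm w = 0")
    case False
    then have "norm u * norm w > 0" by (simp add: less_le)
    then show ?thesis using Cauchy_Schwarz_ineq2[of u w] by (simp add: abs_div divide_le_eq_1)
  qed auto
  then have "-1 \<le> inner u w / (norm u * norm w)" "inner u w / (norm u * norm w) \<le> 1"
    by (auto simp only: abs_le_iff)
  then show ?thesis unfolding vec_angle_def using arccos_lbound arccos_ubound by blast
qed

lemma bond_angle_bounds: "0 \<le> bond_angle y i \<and> bond_angle y i \<le> pi"
  unfolding bond_angle_def by (rule vec_angle_bounds)

lemma norm_diff_squared_vec_angle:
  fixes u w :: "real^3"
  assumes "u \<noteq> 0" "w \<noteq> 0"
  shows "norm (u - w)^2 = norm u^2 + norm w^2 - 2 * norm u * norm w * cos (vec_angle u w)"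
proof -
  have nz: "norm u * norm w > 0" using assms by simp
  have "\<bar>inner u w\<bar> \<le> norm u * norm w" by (rule Cauchy_Schwarz_ineq2)
  then have "-1 \<le> inner u w / (norm u * norm w)" "inner u w / (norm u * norm w) \<le> 1"
    using nz by (auto simp: divide_simps abs_le_iff)
  then have "cos (vec_angle u w) = inner u w / (norm u * norm w)"
    unfolding vec_angle_def by simp
  then have "2 * norm u * norm w * cos (vec_angle u w) = 2 * inner u w" using nz by simp
  moreover have "norm (u - w)^2 = norm u^2 + norm w^2 - 2 * inner u w"
    by (simp add: power2_norm_eq_inner inner_diff inner_commute)
  ultimately show ?thesis by simp
qed

lemma snd_len_squared:
  assumes "admissible_cell y"
  shows "snd_len y i ^ 2 = bond_len y i ^ 2 + bond_len y (i - 1) ^ 2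
           - 2 * bond_len y i * bond_len y (i - 1) * cos (bond_angle y (i - 1))"
proof -
  define u where "u = cpt y i - cpt y (i - 1)"
  define w where "w = cpt y (i - 2) - cpt y (i - 1)"
  have bu: "bond_len y i = norm u" unfolding u_def bond_len_def dist_norm ..
  have bw: "bond_len y (i - 1) = norm w" unfolding w_def bond_len_def dist_norm
    by (simp add: norm_minus_commute algebra_simps)
  have "bond_angle y (i - 1) = vec_angle u w" "snd_len y i = norm (u - w)"
    unfolding bond_angle_def snd_len_def u_def w_def dist_norm by (simp_all add: algebra_simps)
  moreover have "u \<noteq> 0" "w \<noteq> 0" using assms bu bw unfolding admissible_cell_def
    by (metis less_irrefl norm_zero)+
  ultimately show ?thesis using bu bw norm_diff_squared_vec_angle by simp
qed

lemma snd_len_eq_sqrt: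
  assumes "admissible_cell y"
  shows "snd_len y i = sqrt (bond_len y i ^ 2 + bond_len y (i - 1) ^ 2
           - 2 * bond_len y i * bond_len y (i - 1) * cos (bond_angle y (i - 1)))"
  unfolding snd_len_squared[OF assms, symmetric] by (simp add: snd_len_def)

definition pair_energy :: "(real \<Rightarrow> real) \<Rightarrow> (real \<Rightarrow> real) \<Rightarrow> real \<times> real \<times> real \<Rightarrow> real" where
  "pair_energy v2 v3 = (\<lambda>(l1, l2, t). (1/4) * v2 l1 + (1/4) * v2 l2
     + v2 (sqrt (l1^2 + l2^2 - 2 * l1 * l2 * cos t)) + v3 t)"

definition bond_triple :: "(nat \<Rightarrow> real^3) \<Rightarrow> int \<Rightarrow> real \<times> real \<times> real" where
  "bond_triple y i = (bond_len y i, bond_len y (i - 1), bond_angle y (i - 1))"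

lemma bond_triple_cong:
  assumes "i mod 6 = j mod 6"
  shows "bond_triple y i = bond_triple y j"
proof -
  have "(i - 1) mod 6 = (j - 1) mod 6" by (rule mod_diff_cong[OF assms refl])
  then show ?thesis
    unfolding bond_triple_def using bond_len_cong[OF assms] bond_len_cong bond_angle_cong by blast
qed

lemma E_cell_eq_sum_pair_energy:
  assumes "admissible_cell y"
  shows "E_cell v2 v3 y = (\<Sum>i\<in>{1..6}. pair_energy v2 v3 (bond_triple y i))"
proof -
  have "bond_len y 0 = bond_len y 6" "bond_angle y 0 = bond_angle y 6"
    by (rule bond_len_cong bond_angle_cong; simp)+
  then show ?thesis
    unfolding E_cell_def sum_int_1_6 pair_energy_def bond_triple_def snd_len_eq_sqrt[OF assms]
    by simp
qed

lemma E_cell_regular: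
  assumes "admissible_cell y" "\<And>i. bond_len y i = l" "\<And>i. bond_angle y i = \<theta>"
  shows "E_cell v2 v3 y = 6 * pair_energy v2 v3 (l, l, \<theta>)"
  unfolding E_cell_eq_sum_pair_energy[OF assms(1)] sum_int_1_6 bond_triple_def assms(2,3) by simp

text \<open>The chair conformation: a regular hexagon of circumradius r whose vertices are alternately
  raised and lowered by h.\<close>

definition chair :: "real \<Rightarrow> real \<Rightarrow> nat \<Rightarrow> real^3" where
  "chair r h k = [vector [r, 0, h], vector [r/2, r * sqrt 3 / 2, -h],
     vector [-r/2, r * sqrt 3 / 2, h], vector [-r, 0, -h],
     vector [-r/2, -r * sqrt 3 / 2, h], vector [r/2, -r * sqrt 3 / 2, -h]] ! (k mod 6)"

lemma dist_vector_3:
  "dist (vector [a, b, c] :: real^3) (vector [d, e, f]) = sqrt ((a - d)^2 + (b - e)^2 + (c - f)^2)"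
  by (simp add: dist_norm norm_eq_sqrt_inner inner_vec_def sum_3 vector_3 power2_eq_square)

lemma int_mod_6_cases:
  "i mod 6 = 0 \<or> i mod 6 = 1 \<or> i mod 6 = 2 \<or> i mod 6 = 3 \<or> i mod 6 = 4 \<or> i mod 6 = (5::int)"
  by presburger

lemma sum_sq_hexagon_coords: "(r/2)^2 + (r * sqrt 3 / 2)^2 = (r^2 :: real)"
  by (simp add: power_mult_distrib power_divide)

lemma chair_bond_len: "bond_len (chair r h) i = sqrt (r^2 + 4 * h^2)"
proof -
  have mod6: "bond_len (chair r h) i = bond_len (chair r h) (i mod 6)"
    by (rule bond_len_cong) simp
  show ?thesis
    unfolding mod6 using int_mod_6_cases[of i]
    by (elim disjE) (simp_all add: bond_len_def cpt_def chair_def dist_vector_3 sum_sq_hexagon_coords)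
qed

lemma chair_snd_len:
  assumes "r \<ge> 0"
  shows "snd_len (chair r h) i = sqrt 3 * r"
proof -
  have mod6: "snd_len (chair r h) i = snd_len (chair r h) (i mod 6)"
    by (rule snd_len_cong) simp
  have a: "(3 * r / 2)^2 + (r * sqrt 3 / 2)^2 = (sqrt 3 * r)^2"
    by (simp add: power_mult_distrib power_divide)
  have b: "(r * sqrt 3)^2 = (sqrt 3 * r)^2"
    by (simp add: algebra_simps)
  have c: "\<bar>sqrt 3 * r\<bar> = sqrt 3 * r" using assms by simp
  show ?thesis
    unfolding mod6 using int_mod_6_cases[of i]
    by (elim disjE) (simp_all add: snd_len_def cpt_def chair_def dist_vector_3 a b c)
qed

text \<open>The circumradius r is dictated by the law of cosines, since second neighbours are at distance
  sqrt 3 * r; the height h then adjusts the bond length, which needs r \<le> l, i.e. \<theta> \<le> 2 pi / 3.\<close>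

lemma ex_regular_cell:
  assumes l: "l > 0" and \<theta>: "0 < \<theta>" "\<theta> \<le> 2*pi/3"
  shows "\<exists>y. admissible_cell y \<and> (\<forall>i. bond_len y i = l) \<and> (\<forall>i. bond_angle y i = \<theta>)"
proof -
  have cos_lt: "cos \<theta> < 1" using cos_monotone_0_pi[of 0 \<theta>] \<theta> pi_gt3 by simp
  have cos_ge: "cos \<theta> \<ge> -1/2" using cos_monotone_0_pi_le[of \<theta> "2*pi/3"] \<theta> cos_120 by simp
  define r where "r = sqrt (2 * l^2 * (1 - cos \<theta>) / 3)"
  have r2: "r^2 = 2 * l^2 * (1 - cos \<theta>) / 3" unfolding r_def using cos_lt by simp
  have r_pos: "r > 0" unfolding r_def using cos_lt l by simp
  have "0 \<le> l^2 * (1 + 2 * cos \<theta>)" using cos_ge by (intro mult_nonneg_nonneg) auto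
  then have r_le: "r^2 \<le> l^2" unfolding r2 by (simp add: field_simps algebra_simps)
  define h where "h = sqrt (l^2 - r^2) / 2"
  have h2: "4 * h^2 = l^2 - r^2" unfolding h_def using r_le by (simp add: power_divide)
  define y where "y = chair r h"
  have bond: "bond_len y i = l" for i unfolding y_def chair_bond_len h2 using l by simp
  have snd: "snd_len y i = sqrt 3 * r" for i unfolding y_def using chair_snd_len r_pos by simp
  have adm: "admissible_cell y" unfolding admissible_cell_def using bond snd r_pos l by simp
  have "bond_angle y i = \<theta>" for i
  proof -
    have "snd_len y (i + 1) ^ 2 = bond_len y (i + 1) ^ 2 + bond_len y (i + 1 - 1) ^ 2
          - 2 * bond_len y (i + 1) * bond_len y (i + 1 - 1) * cos (bond_angle y (i + 1 - 1))"
      by (rule snd_len_squared[OF adm])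
    then have "3 * r^2 = 2 * l^2 - 2 * l^2 * cos (bond_angle y i)"
      unfolding bond snd by (simp add: power_mult_distrib power2_eq_square[symmetric])
    then have "cos (bond_angle y i) = cos \<theta>" unfolding r2 using l by (simp add: field_simps)
    then have "arccos (cos (bond_angle y i)) = arccos (cos \<theta>)" by simp
    moreover have "arccos (cos (bond_angle y i)) = bond_angle y i"
      using arccos_cos bond_angle_bounds by blast
    moreover have "arccos (cos \<theta>) = \<theta>" using arccos_cos \<theta> pi_gt3 by simp
    ultimately show ?thesis by simp
  qed
  with adm bond show ?thesis by blast
qed

lemma bond_len_attained: "\<exists>j\<in>{1..6}. bond_len y i = bond_len y j"
  using mod6_representative bond_len_cong by blast

lemma bond_angle_attained: "\<exists>j\<in>{1..6}. bond_angle y i = bond_angle y j"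
  using mod6_representative bond_angle_cong by blast

lemma sum_bond_triple:
  "(\<Sum>i\<in>{1..6}. bond_triple y i)
     = (\<Sum>i\<in>{1..6}. bond_len y i, \<Sum>i\<in>{1..6}. bond_len y i, \<Sum>i\<in>{1..6}. bond_angle y i)"
proof -
  have "bond_len y 0 = bond_len y 6" "bond_angle y 0 = bond_angle y 6"
    by (rule bond_len_cong bond_angle_cong; simp)+
  then show ?thesis
    unfolding prod_eq_iff fst_sum snd_sum bond_triple_def sum_int_1_6 by simp
qed

section \<open>Optimal cells\<close>

lemma optimal_cell_admissible: "optimal_cell v2 v3 y \<Longrightarrow> admissible_cell y"
  unfolding optimal_cell_def by blast

lemma optimal_energy_le_chair:
  assumes "optimal_cell v2 v3 y" "l > 0" "0 < \<theta>" "\<theta> \<le> 2*pi/3"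
  shows "E_cell v2 v3 y \<le> 6 * pair_energy v2 v3 (l, l, \<theta>)"
proof -
  obtain z where "admissible_cell z" "\<And>i. bond_len z i = l" "\<And>i. bond_angle z i = \<theta>"
    using ex_regular_cell[OF assms(2-4)] by blast
  with assms(1) show ?thesis
    unfolding optimal_cell_def by (metis E_cell_regular)
qed

lemma cos_120_minus_le:
  assumes "0 \<le> d" "d \<le> pi"
  shows "cos (2*pi/3 - d) \<le> -1/2 + d"
proof -
  have "cos (2*pi/3 - d) - cos (2*pi/3) = 2 * sin ((4*pi/3 - d) / 2) * sin (d / 2)"
    using cos_diff_cos[of "2*pi/3 - d" "2*pi/3"] by simp
  also have "\<dots> \<le> 2 * 1 * (d / 2)"
    using assms by (intro mult_mono sin_x_le_x sin_ge_zero) auto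
  finally show ?thesis using cos_120 by simp
qed

lemma law_of_cosines_lower_bound:
  fixes d b b' t s :: real
  assumes d: "0 \<le> d" "d \<le> 1" and b: "1 - d \<le> b" "1 - d \<le> b'"
    and t: "2*pi/3 - d \<le> t" "t \<le> pi"
    and s: "s^2 = b^2 + b'^2 - 2 * b * b' * cos t" "0 \<le> s"
  shows "sqrt 3 * (1 - d)^2 \<le> s"
proof -
  have "cos t \<le> cos (2*pi/3 - d)"
    using t d pi_gt3 by (intro cos_monotone_0_pi_le) auto
  then have cos_t: "cos t \<le> -1/2 + d" using cos_120_minus_le[of d] d pi_gt3 by linarith
  have bb: "(1 - d) * (1 - d) \<le> b * b'" using b d by (intro mult_mono) auto
  moreover have "0 \<le> b * b'" using b d by (intro mult_nonneg_nonneg) linarith+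
  ultimately have "2 * ((1 - d) * (1 - d)) * (3/2 - d) \<le> 2 * (b * b') * (1 - cos t)"
    using cos_t d by (intro mult_mono[of "2 * ((1 - d) * (1 - d))"]) auto
  also have "\<dots> \<le> (b - b')^2 + 2 * (b * b') * (1 - cos t)" by simp
  also have "\<dots> = s^2" unfolding s by (simp add: power2_eq_square algebra_simps)
  finally have "(sqrt 3 * (1 - d)^2)^2 + (1 - d)^2 * (d * (4 - 3 * d)) \<le> s^2"
    by (simp add: power2_eq_square power_mult_distrib algebra_simps)
  moreover have "0 \<le> (1 - d)^2 * (d * (4 - 3 * d))" using d by simp
  ultimately have "(sqrt 3 * (1 - d)^2)^2 \<le> s^2" by linarith
  then show ?thesis using s(2) by (rule power2_le_imp_le)
qed

lemma sqrt3_ge_17_10: "17/10 \<le> sqrt (3::real)"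
  by (rule real_le_rsqrt) (simp add: power2_eq_square)

definition delta_box :: "real \<Rightarrow> (real \<times> real \<times> real) set" where
  "delta_box \<delta> = {(l1, l2, t). \<bar>l1 - 1\<bar> < \<delta> \<and> \<bar>l2 - 1\<bar> < \<delta> \<and> \<bar>t - 2*pi/3\<bar> < \<delta>}"

locale standing_potentials =
  fixes v2 v3 :: "real \<Rightarrow> real" and \<delta> :: real
  assumes standing: "standing_assumptions v2 v3 \<delta>"
begin

lemma v2_one: "v2 1 = -1"
  using standing unfolding standing_assumptions_def by blast

lemma v2_gt_min: "0 < r \<Longrightarrow> r \<noteq> 1 \<Longrightarrow> -1 < v2 r"
  using standing unfolding standing_assumptions_def by blast

lemma v2_ge_min: "0 < r \<Longrightarrow> -1 \<le> v2 r"
  using v2_one v2_gt_min by (cases "r = 1") force+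

lemma v2_antimono: "0 < r \<Longrightarrow> r \<le> s \<Longrightarrow> s < 1 \<Longrightarrow> v2 s \<le> v2 r"
  using standing unfolding standing_assumptions_def by blast

lemma v2_mono: "1 \<le> r \<Longrightarrow> r \<le> s \<Longrightarrow> v2 r \<le> v2 s"
  using standing unfolding standing_assumptions_def by blast

lemma v2_has_pos_derivative: "5/4 < r \<Longrightarrow> r \<le> sqrt 3 \<Longrightarrow> \<exists>d>0. (v2 has_real_derivative d) (at r)"
  using standing unfolding standing_assumptions_def by auto

lemma v3_ideal: "v3 (2*pi/3) = 0"
  using standing unfolding standing_assumptions_def by blast

lemma v3_pos: "0 \<le> t \<Longrightarrow> t \<le> pi \<Longrightarrow> t \<noteq> 2*pi/3 \<Longrightarrow> 0 < v3 t"
  using standing unfolding standing_assumptions_def by auto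

lemma v3_nonneg: "0 \<le> t \<Longrightarrow> t \<le> pi \<Longrightarrow> 0 \<le> v3 t"
  using v3_ideal v3_pos by (cases "t = 2*pi/3") force+

lemma v3_differentiable: "v3 differentiable (at (2*pi/3))"
  using standing unfolding standing_assumptions_def by blast

lemma delta_pos: "0 < \<delta>" and delta_le: "\<delta> \<le> 1/5"
  using standing unfolding standing_assumptions_def by auto

lemma v2_short_bond: "11 + 12 * v2 (sqrt 3) < v2 (1 - \<delta>)"
  using standing unfolding standing_assumptions_def by blast

lemma v2_long_bond: "-1 + 12 * v2 (sqrt 3) - 12 * v2 (sqrt 3 * (1 - \<delta>)^2) < v2 (1 + \<delta>)"
  using standing unfolding standing_assumptions_def by blast

lemma v3_far_angle: "0 \<le> t \<Longrightarrow> t \<le> pi \<Longrightarrow> \<delta> \<le> \<bar>t - 2*pi/3\<bar> \<Longrightarrow> 6 + 6 * v2 (sqrt 3) < v3 t"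
  using standing unfolding standing_assumptions_def by auto

lemma pair_energy_strict_convex: "strict_convex_on (delta_box \<delta>) (pair_energy v2 v3)"
  using standing unfolding standing_assumptions_def delta_box_def pair_energy_def by blast

lemma energy_sums_lower_bound:
  assumes "admissible_cell y"
  shows "-6 \<le> (\<Sum>i\<in>{1..6}. v2 (bond_len y i))" "-6 \<le> (\<Sum>i\<in>{1..6}. v2 (snd_len y i))"
    "0 \<le> (\<Sum>i\<in>{1..6}. v3 (bond_angle y i))"
proof -
  have "real (card {1..6::int}) * (-1) \<le> (\<Sum>i\<in>{1..6}. v2 (bond_len y i))"
    "real (card {1..6::int}) * (-1) \<le> (\<Sum>i\<in>{1..6}. v2 (snd_len y i))"
    using assms v2_ge_min by (intro sum_bounded_below; simp add: admissible_cell_def)+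
  then show "-6 \<le> (\<Sum>i\<in>{1..6}. v2 (bond_len y i))" "-6 \<le> (\<Sum>i\<in>{1..6}. v2 (snd_len y i))"
    by simp_all
  show "0 \<le> (\<Sum>i\<in>{1..6}. v3 (bond_angle y i))"
    using v3_nonneg bond_angle_bounds by (simp add: sum_nonneg)
qed

text \<open>The flat unit hexagon is the competitor behind the a priori bounds (i)--(iii).\<close>

lemma optimal_energy_le: "optimal_cell v2 v3 y \<Longrightarrow> E_cell v2 v3 y \<le> -3 + 6 * v2 (sqrt 3)"
  using optimal_energy_le_chair[of v2 v3 y 1 "2*pi/3"]
  by (simp add: pair_energy_def cos_120 v2_one v3_ideal)

lemma optimal_bond_angle_near:
  assumes opt: "optimal_cell v2 v3 y"
  shows "\<bar>bond_angle y i - 2*pi/3\<bar> < \<delta>"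
proof (rule ccontr)
  assume far: "\<not> ?thesis"
  obtain j where j: "j \<in> {1..6}" "bond_angle y i = bond_angle y j" using bond_angle_attained by blast
  have "6 + 6 * v2 (sqrt 3) < v3 (bond_angle y j)"
    using far j bond_angle_bounds v3_far_angle by force
  also have "v3 (bond_angle y j) \<le> (\<Sum>i\<in>{1..6}. v3 (bond_angle y i))"
    using j v3_nonneg bond_angle_bounds by (intro member_le_sum) auto
  finally show False
    using energy_sums_lower_bound[OF optimal_cell_admissible[OF opt]] optimal_energy_le[OF opt]
    unfolding E_cell_def by linarith
qed

lemma optimal_bond_len_gt:
  assumes opt: "optimal_cell v2 v3 y"
  shows "1 - \<delta> < bond_len y i"
proof (rule ccontr)
  assume short: "\<not> ?thesis"
  obtain j where j: "j \<in> {1..6}" "bond_len y i = bond_len y j" using bond_len_attained by blast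
  have adm: "admissible_cell y" using optimal_cell_admissible[OF opt] .
  then have "v2 (1 - \<delta>) \<le> v2 (bond_len y j)"
    using short j delta_pos by (intro v2_antimono) (auto simp: admissible_cell_def)
  moreover have "v2 (bond_len y j) + (real (card {1..6::int}) - 1) * (-1) \<le> (\<Sum>i\<in>{1..6}. v2 (bond_len y i))"
    using adm j v2_ge_min by (intro member_le_sum_bounded_below) (auto simp: admissible_cell_def)
  ultimately show False
    using v2_short_bond energy_sums_lower_bound[OF adm] optimal_energy_le[OF opt]
    unfolding E_cell_def by simp
qed

lemma optimal_snd_len_ge:
  assumes opt: "optimal_cell v2 v3 y"
  shows "sqrt 3 * (1 - \<delta>)^2 \<le> snd_len y i"
proof (rule law_of_cosines_lower_bound)
  show "0 \<le> \<delta>" "\<delta> \<le> 1" using delta_pos delta_le by auto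
  show "1 - \<delta> \<le> bond_len y i" "1 - \<delta> \<le> bond_len y (i - 1)"
    using optimal_bond_len_gt[OF opt] by (simp_all add: less_imp_le)
  show "2*pi/3 - \<delta> \<le> bond_angle y (i - 1)"
    using optimal_bond_angle_near[OF opt, of "i - 1"] by linarith
  show "bond_angle y (i - 1) \<le> pi" using bond_angle_bounds by blast
  show "snd_len y i ^ 2 = bond_len y i ^ 2 + bond_len y (i - 1) ^ 2
          - 2 * bond_len y i * bond_len y (i - 1) * cos (bond_angle y (i - 1))"
    using snd_len_squared[OF optimal_cell_admissible[OF opt]] .
  show "0 \<le> snd_len y i" unfolding snd_len_def by simp
qed

lemma snd_threshold_ge_1: "1 \<le> sqrt 3 * (1 - \<delta>)^2"
proof -
  have "(4/5)^2 \<le> (1 - \<delta>)^2" using delta_pos delta_le by (intro power_mono) auto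
  then have "17/10 * (4/5)^2 \<le> sqrt 3 * (1 - \<delta>)^2" using sqrt3_ge_17_10 by (intro mult_mono) auto
  then show ?thesis by (simp add: power2_eq_square)
qed

lemma optimal_bond_len_lt:
  assumes opt: "optimal_cell v2 v3 y"
  shows "bond_len y i < 1 + \<delta>"
proof (rule ccontr)
  assume long: "\<not> ?thesis"
  obtain j where j: "j \<in> {1..6}" "bond_len y i = bond_len y j" using bond_len_attained by blast
  have adm: "admissible_cell y" using optimal_cell_admissible[OF opt] .
  have "v2 (1 + \<delta>) \<le> v2 (bond_len y j)"
    using long j delta_pos by (intro v2_mono) auto
  moreover have "v2 (bond_len y j) + (real (card {1..6::int}) - 1) * (-1) \<le> (\<Sum>i\<in>{1..6}. v2 (bond_len y i))"
    using adm j v2_ge_min by (intro member_le_sum_bounded_below) (auto simp: admissible_cell_def)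
  moreover have "real (card {1..6::int}) * v2 (sqrt 3 * (1 - \<delta>)^2) \<le> (\<Sum>i\<in>{1..6}. v2 (snd_len y i))"
    using snd_threshold_ge_1 optimal_snd_len_ge[OF opt] by (intro sum_bounded_below v2_mono) auto
  ultimately show False
    using v2_long_bond energy_sums_lower_bound[OF adm] optimal_energy_le[OF opt]
    unfolding E_cell_def by simp
qed

lemma optimal_bond_triple_in_box:
  assumes "optimal_cell v2 v3 y"
  shows "bond_triple y i \<in> delta_box \<delta>"
  using optimal_bond_len_gt[OF assms, of i] optimal_bond_len_lt[OF assms, of i]
    optimal_bond_len_gt[OF assms, of "i - 1"] optimal_bond_len_lt[OF assms, of "i - 1"]
    optimal_bond_angle_near[OF assms, of "i - 1"]
  unfolding bond_triple_def delta_box_def by (simp add: abs_less_iff)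

lemma delta_box_bounds:
  assumes "(l1, l2, t) \<in> delta_box \<delta>"
  shows "1 - \<delta> < l1" "0 < t" "t \<le> pi"
  using assms delta_le pi_gt3 unfolding delta_box_def by (auto simp: abs_less_iff)

lemma pair_energy_lt_of_angle_gt:
  assumes l: "1 - \<delta> < l" and t: "2*pi/3 < t" "t \<le> pi"
  shows "pair_energy v2 v3 (l, l, 2*pi/3) < pair_energy v2 v3 (l, l, t)"
proof -
  have "cos t \<le> -1/2" using cos_monotone_0_pi_le[of "2*pi/3" t] t cos_120 by simp
  then have "l * l * cos t \<le> l * l * (-1/2)" by (intro mult_left_mono) auto
  then have le: "l^2 + l^2 - 2*l*l*cos (2*pi/3) \<le> l^2 + l^2 - 2*l*l*cos t"
    unfolding cos_120 by simp
  have "(4/5)^2 \<le> l^2" using l delta_le by (intro power_mono) auto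
  then have "1 \<le> sqrt (l^2 + l^2 - 2*l*l*cos (2*pi/3))"
    unfolding cos_120 by (simp add: power2_eq_square)
  with le have "v2 (sqrt (l^2 + l^2 - 2*l*l*cos (2*pi/3))) \<le> v2 (sqrt (l^2 + l^2 - 2*l*l*cos t))"
    by (intro v2_mono) auto
  moreover have "0 < v3 t" using v3_pos t pi_gt3 by auto
  ultimately show ?thesis unfolding pair_energy_def by (simp add: v3_ideal)
qed

lemma optimal_energy_le_regular:
  assumes opt: "optimal_cell v2 v3 y" and l: "1 - \<delta> < l" and t: "0 < t" "t \<le> pi"
  shows "E_cell v2 v3 y \<le> 6 * pair_energy v2 v3 (l, l, t)"
proof -
  have l_pos: "0 < l" using l delta_le by simp
  show ?thesis
  proof (cases "t \<le> 2*pi/3")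
    case True
    then show ?thesis using optimal_energy_le_chair[OF opt l_pos t(1)] by simp
  next
    case False
    then have "pair_energy v2 v3 (l, l, 2*pi/3) < pair_energy v2 v3 (l, l, t)"
      using pair_energy_lt_of_angle_gt l t by simp
    moreover have "E_cell v2 v3 y \<le> 6 * pair_energy v2 v3 (l, l, 2*pi/3)"
      using optimal_energy_le_chair[OF opt l_pos] pi_gt3 by simp
    ultimately show ?thesis by linarith
  qed
qed

lemma optimal_energy_le_box:
  assumes "optimal_cell v2 v3 y" "(l, l, t) \<in> delta_box \<delta>"
  shows "E_cell v2 v3 y \<le> 6 * pair_energy v2 v3 (l, l, t)"
  using optimal_energy_le_regular[OF assms(1)] delta_box_bounds[OF assms(2)] by blast

text \<open>Otherwise, by strict Jensen, the regular cell with the mean bond length and mean bond angle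
  would have lower energy.\<close>

lemma optimal_bond_triple_const:
  assumes opt: "optimal_cell v2 v3 y"
  shows "bond_triple y i = bond_triple y 1"
proof (rule ccontr)
  assume "bond_triple y i \<noteq> bond_triple y 1"
  moreover obtain j where j: "j \<in> {1..6}" "i mod 6 = j mod 6" using mod6_representative by blast
  ultimately have j_ne: "bond_triple y j \<noteq> bond_triple y 1" using bond_triple_cong[OF j(2)] by simp
  define lb where "lb = (\<Sum>i\<in>{1..6}. bond_len y i) / 6"
  define tb where "tb = (\<Sum>i\<in>{1..6}. bond_angle y i) / 6"
  have mean: "(\<Sum>i\<in>{1..6::int}. (1 / card {1..6::int}) *\<^sub>R bond_triple y i) = (lb, lb, tb)"
    unfolding lb_def tb_def scaleR_sum_right[symmetric] sum_bond_triple by simp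
  have in_box: "bond_triple y i \<in> delta_box \<delta>" for i
    using optimal_bond_triple_in_box[OF opt] .
  have "(lb, lb, tb) \<in> delta_box \<delta>"
    unfolding mean[symmetric] using pair_energy_strict_convex in_box
    by (intro convex_sum) (auto simp: strict_convex_on_def)
  then have "E_cell v2 v3 y \<le> 6 * pair_energy v2 v3 (lb, lb, tb)"
    by (rule optimal_energy_le_box[OF opt])
  moreover have "pair_energy v2 v3 (lb, lb, tb)
      < (\<Sum>i\<in>{1..6}. pair_energy v2 v3 (bond_triple y i)) / card {1..6::int}"
    unfolding mean[symmetric]
    using strict_convex_on_mean_less[OF pair_energy_strict_convex _ in_box, of "{1..6}" j 1] j(1) j_ne
    by simp
  ultimately show False
    using E_cell_eq_sum_pair_energy[OF optimal_cell_admissible[OF opt]] by simp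
qed

lemma optimal_bond_len_const: "optimal_cell v2 v3 y \<Longrightarrow> bond_len y i = bond_len y 1"
  using optimal_bond_triple_const[of y i] unfolding bond_triple_def by simp

lemma optimal_bond_angle_const:
  assumes "optimal_cell v2 v3 y"
  shows "bond_angle y i = bond_angle y 1"
proof -
  have "bond_angle y i = bond_angle y 0" "bond_angle y 1 = bond_angle y 0"
    using optimal_bond_triple_const[OF assms, of "i + 1"] optimal_bond_triple_const[OF assms, of 2]
    unfolding bond_triple_def by simp_all
  then show ?thesis by simp
qed

lemma optimal_energy_eq:
  assumes opt: "optimal_cell v2 v3 y"
  shows "E_cell v2 v3 y = 6 * pair_energy v2 v3 (bond_len y 1, bond_len y 1, bond_angle y 1)"
  using optimal_cell_admissible[OF opt] optimal_bond_len_const[OF opt] optimal_bond_angle_const[OF opt]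
  by (rule E_cell_regular)

lemma optimal_bond_angle_le:
  assumes opt: "optimal_cell v2 v3 y"
  shows "bond_angle y 1 \<le> 2*pi/3"
proof (rule ccontr)
  let ?l = "bond_len y 1" and ?t = "bond_angle y 1"
  assume "\<not> ?thesis"
  then have "pair_energy v2 v3 (?l, ?l, 2*pi/3) < pair_energy v2 v3 (?l, ?l, ?t)"
    using pair_energy_lt_of_angle_gt optimal_bond_len_gt[OF opt] bond_angle_bounds by simp
  moreover have "E_cell v2 v3 y \<le> 6 * pair_energy v2 v3 (?l, ?l, 2*pi/3)"
    using optimal_energy_le_regular[OF opt optimal_bond_len_gt[OF opt]] pi_gt3 by simp
  ultimately show False using optimal_energy_eq[OF opt] by simp
qed

lemma pair_energy_lt_of_len_gt:
  assumes l: "1 < l" and t: "pi/3 \<le> t" "t \<le> pi"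
  shows "pair_energy v2 v3 (1, 1, t) < pair_energy v2 v3 (l, l, t)"
proof -
  have "cos t \<le> 1/2" using cos_monotone_0_pi_le[of "pi/3" t] t cos_60 by simp
  then have q_ge: "1 \<le> 2 - 2 * cos t" by simp
  have "1 \<le> l * l" using mult_mono[of 1 l 1 l] l by simp
  then have "(2 - 2 * cos t) * 1 \<le> (2 - 2 * cos t) * (l * l)" using q_ge by (intro mult_left_mono) auto
  then have "v2 (sqrt (2 - 2 * cos t)) \<le> v2 (sqrt (l^2 + l^2 - 2 * l * l * cos t))"
    using q_ge by (intro v2_mono) (auto simp: power2_eq_square algebra_simps)
  moreover have "v2 1 < v2 l" using v2_gt_min[of l] l v2_one by simp
  ultimately show ?thesis unfolding pair_energy_def by simp
qed

lemma optimal_bond_len_le: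
  assumes opt: "optimal_cell v2 v3 y"
  shows "bond_len y 1 \<le> 1"
proof (rule ccontr)
  let ?l = "bond_len y 1" and ?t = "bond_angle y 1"
  assume "\<not> ?thesis"
  moreover have "pi/3 \<le> ?t" "0 < ?t" "?t \<le> pi"
    using optimal_bond_angle_near[OF opt, of 1] delta_le pi_gt3 bond_angle_bounds
    by (auto simp: abs_less_iff)
  ultimately have "pair_energy v2 v3 (1, 1, ?t) < pair_energy v2 v3 (?l, ?l, ?t)"
    using pair_energy_lt_of_len_gt by simp
  moreover have "E_cell v2 v3 y \<le> 6 * pair_energy v2 v3 (1, 1, ?t)"
    using optimal_energy_le_regular[OF opt] delta_pos \<open>0 < ?t\<close> \<open>?t \<le> pi\<close> by simp
  ultimately show False using optimal_energy_eq[OF opt] by simp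
qed

lemma v3_derivative_ideal:
  assumes "(v3 has_real_derivative D) (at (2*pi/3))"
  shows "D = 0"
proof (rule DERIV_local_min[OF assms, of 1])
  show "\<forall>t. \<bar>2*pi/3 - t\<bar> < 1 \<longrightarrow> v3 (2*pi/3) \<le> v3 t"
    using v3_ideal v3_nonneg pi_gt3 by (auto simp: abs_less_iff)
qed simp

text \<open>At 2 pi / 3 the angle term is stationary, while the second-neighbour distance sqrt 3 * l lies
  in (5/4, sqrt 3], where v2 strictly increases; so the pair energy strictly increases in t there.\<close>

lemma pair_energy_decreasing_at_ideal:
  assumes l: "4/5 < l" "l \<le> 1"
  shows "\<exists>t. 0 < t \<and> t < 2*pi/3 \<and> pair_energy v2 v3 (l, l, t) < pair_energy v2 v3 (l, l, 2*pi/3)"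
proof -
  define t0 where "t0 = 2*pi/3"
  define q where "q t = l^2 + l^2 - 2 * l * l * cos t" for t
  define h where "h t = pair_energy v2 v3 (l, l, t)" for t
  have q_t0: "q t0 = 3 * l^2" unfolding q_def t0_def cos_120 by (simp add: power2_eq_square)
  then have q_pos: "0 < q t0" using l by simp
  have sqrt_q: "sqrt (q t0) = sqrt 3 * l" unfolding q_t0 real_sqrt_mult using l by simp
  have "17/10 * (4/5) < sqrt 3 * l" using sqrt3_ge_17_10 l by (intro mult_le_less_imp_less) auto
  then obtain d where d: "0 < d" "(v2 has_real_derivative d) (at (sqrt (q t0)))"
    using v2_has_pos_derivative[of "sqrt (q t0)"] l unfolding sqrt_q by auto
  obtain D3 where D3: "(v3 has_real_derivative D3) (at t0)"
    using v3_differentiable unfolding t0_def by (auto simp: real_differentiable_def)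
  then have D3_zero: "D3 = 0" using v3_derivative_ideal unfolding t0_def by blast
  have dq: "(q has_real_derivative 2 * l * l * sin t0) (at t0)"
    unfolding q_def by (auto intro!: derivative_eq_intros)
  have "((\<lambda>t. v2 (sqrt (q t))) has_real_derivative d * (inverse (sqrt (q t0)) / 2 * (2 * l * l * sin t0))) (at t0)"
    using DERIV_chain2[OF d(2) DERIV_chain2[OF DERIV_real_sqrt[OF q_pos] dq]] .
  then have "(h has_real_derivative 0 + 0 + d * (inverse (sqrt (q t0)) / 2 * (2 * l * l * sin t0)) + D3) (at t0)"
    unfolding h_def pair_energy_def q_def[symmetric] case_prod_conv by (intro DERIV_add D3 DERIV_const)
  moreover have "0 < sin t0" unfolding t0_def using pi_gt3 by (intro sin_gt_zero) auto
  then have "0 < 0 + 0 + d * (inverse (sqrt (q t0)) / 2 * (2 * l * l * sin t0)) + D3"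
    using d(1) q_pos l D3_zero by simp
  ultimately obtain e where e: "0 < e" "\<And>s. 0 < s \<Longrightarrow> s < e \<Longrightarrow> h (t0 - s) < h t0"
    using DERIV_pos_inc_left by blast
  have "0 < t0 - min (e/2) 1" "t0 - min (e/2) 1 < t0" "h (t0 - min (e/2) 1) < h t0"
    using e pi_gt3 unfolding t0_def by auto
  then show ?thesis unfolding h_def t0_def by blast
qed

lemma optimal_bond_angle_lt:
  assumes opt: "optimal_cell v2 v3 y"
  shows "bond_angle y 1 < 2*pi/3"
proof (rule ccontr)
  let ?l = "bond_len y 1"
  assume "\<not> ?thesis"
  then have t: "bond_angle y 1 = 2*pi/3" using optimal_bond_angle_le[OF opt] by simp
  have "4/5 < ?l" "?l \<le> 1"
    using optimal_bond_len_gt[OF opt, of 1] optimal_bond_len_le[OF opt] delta_le by auto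
  then obtain t where "0 < t" "t < 2*pi/3" "pair_energy v2 v3 (?l, ?l, t) < pair_energy v2 v3 (?l, ?l, 2*pi/3)"
    using pair_energy_decreasing_at_ideal by blast
  moreover have "t \<le> pi" using \<open>t < 2*pi/3\<close> pi_gt3 by simp
  then have "E_cell v2 v3 y \<le> 6 * pair_energy v2 v3 (?l, ?l, t)"
    using optimal_energy_le_regular[OF opt optimal_bond_len_gt[OF opt] \<open>0 < t\<close>] by simp
  ultimately show False using optimal_energy_eq[OF opt] t by simp
qed

text \<open>Two optimal cells have equal energy, so by strict convexity the regular cell built from the
  midpoint of their bond data would be cheaper unless the data coincide.\<close>

lemma optimal_cells_same_shape:
  assumes opt: "optimal_cell v2 v3 y" and opt': "optimal_cell v2 v3 y'"
  shows "bond_len y 1 = bond_len y' 1 \<and> bond_angle y 1 = bond_angle y' 1"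
proof (rule ccontr)
  define p where "p = (bond_len y 1, bond_len y 1, bond_angle y 1)"
  define p' where "p' = (bond_len y' 1, bond_len y' 1, bond_angle y' 1)"
  define m where "m = (1/2) *\<^sub>R (p + p')"
  assume "\<not> ?thesis"
  then have "p \<noteq> p'" unfolding p_def p'_def by auto
  have "bond_triple y 1 = p" "bond_triple y' 1 = p'"
    unfolding p_def p'_def bond_triple_def
    using optimal_bond_len_const[OF opt, of 0] optimal_bond_angle_const[OF opt, of 0]
      optimal_bond_len_const[OF opt', of 0] optimal_bond_angle_const[OF opt', of 0] by simp_all
  then have in_box: "p \<in> delta_box \<delta>" "p' \<in> delta_box \<delta>"
    using optimal_bond_triple_in_box[OF opt] optimal_bond_triple_in_box[OF opt'] by metis+
  have "E_cell v2 v3 y = E_cell v2 v3 y'" using opt opt' unfolding optimal_cell_def by force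
  then have "pair_energy v2 v3 m < E_cell v2 v3 y / 6"
    using strict_convex_on_midpoint_less[OF pair_energy_strict_convex in_box \<open>p \<noteq> p'\<close>]
      optimal_energy_eq[OF opt] optimal_energy_eq[OF opt'] unfolding m_def p_def p'_def by simp
  moreover have "m \<in> delta_box \<delta>"
    using pair_energy_strict_convex in_box unfolding m_def strict_convex_on_def convex_def
    by (simp add: scaleR_right_distrib)
  then have "E_cell v2 v3 y \<le> 6 * pair_energy v2 v3 m"
    using optimal_energy_le_box[OF opt] unfolding m_def p_def p'_def by simp
  ultimately show False by simp
qed

end

theorem mainTheorem2:
  fixes v2 v3 :: "real \<Rightarrow> real" and \<delta> :: real
  assumes "standing_assumptions v2 v3 \<delta>"
  shows "\<exists>l_star t_star. l_star \<le> 1 \<and> t_star < 2*pi/3 \<and>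
           (\<forall>y. optimal_cell v2 v3 y \<longrightarrow>
              (\<forall>i\<in>{1..6::int}. bond_len y i = l_star \<and> bond_angle y i = t_star))"
proof -
  interpret standing_potentials v2 v3 \<delta> using assms by unfold_locales
  show ?thesis
  proof (cases "\<exists>y0. optimal_cell v2 v3 y0")
    case True
    then obtain y0 where y0: "optimal_cell v2 v3 y0" by blast
    show ?thesis
    proof (intro exI conjI allI impI ballI)
      show "bond_len y0 1 \<le> 1" "bond_angle y0 1 < 2*pi/3"
        using optimal_bond_len_le[OF y0] optimal_bond_angle_lt[OF y0] .
      fix y i assume "optimal_cell v2 v3 y"
      then show "bond_len y i = bond_len y0 1" "bond_angle y i = bond_angle y0 1"
        using optimal_bond_len_const optimal_bond_angle_const optimal_cells_same_shape[OF _ y0] by auto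
    qed
  qed (intro exI[of _ 1] exI[of _ 0], auto)
qed

end
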